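(* For every family of pointed spaces $\{(X_i,x_i)\}_{i\in I}$, $$\mathcal{H}_\infty\Big(\prod_{i\in I}X_i,x_\ast\Big)\cong\prod_{i\in I}\mathcal{H}_\infty(X_i,x_i),$$ where $x_\ast=(x_i)_{i\in I}\in\prod_{i\in I}X_i$ (product topology).
   Context: For $n\geq1$, $\mathbb{H}^n=\{(r_0,\dots,r_n)\in\mathbb{R}^{n+1} : (r_0-1/k)^2+\sum_{i=1}^n r_i^2=(1/k)^2 \text{ for some } k\in\mathbb{N}\}$ is the $n$-dimensional Hawaiian earring with base point $\theta$ (the origin); $S^n_k$ is its sphere of radius $1/k$. $\mathbb{H}^\infty$ is the weak join of $\{(\mathbb{H}^n,\theta)\}_{n\in\mathbb{N}}$: the disjoint union with all base points identified to $\theta$, where $U$ is open iff $U\cap\mathbb{H}^n$ is open in $\mathbb{H}^n$ for all $n$ and, if $\theta\in U$, then $\mathbb{H}^n\subseteq U$ for all but finitely many $n$. $\mathcal{H}_\infty(X,x_0)$ is the set of pointed homotopy classes (rel $\{\theta\}$) of continuous maps $(\mathbb{H}^\infty,\theta)\to(X,x_0)$, with group operation $[f][g]=[f\ast g]$ where on each sphere $S^n_k\subseteq\mathbb{H}^n$, $(f\ast g)|_{S^n_k}$ is the usual $\pi_n$-concatenation of $f|_{S^n_k}$ and $g|_{S^n_k}$. *)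

theory Defs
  imports "HOL-Analysis.Analysis" "HOL-Algebra.Product_Groups"
begin

text \<open>A point (r_0,...,r_n) of R^(n+1) is a function r :: nat => real with r i = 0 for i > n.
  The ambient topology is the product topology on nat => real, which restricted to
  functions supported on {0..n} is the Euclidean topology of R^(n+1).\<close>

definition Rtop :: "(nat \<Rightarrow> real) topology" where
  "Rtop = product_topology (\<lambda>_. euclideanreal) UNIV"

definition sph :: "nat \<Rightarrow> nat \<Rightarrow> (nat \<Rightarrow> real) set" where
  "sph n k = {r. (\<forall>i>n. r i = 0) \<and>
      (r 0 - 1 / real k)^2 + (\<Sum>i=1..n. (r i)^2) = (1 / real k)^2}"

definition Hn :: "nat \<Rightarrow> (nat \<Rightarrow> real) set" where
  "Hn n = (\<Union>k\<in>{1..}. sph n k)"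

definition Hn_top :: "nat \<Rightarrow> (nat \<Rightarrow> real) topology" where
  "Hn_top n = subtopology Rtop (Hn n)"

text \<open>Points of H^infinity: the base point thetaH = (0, 0), and pairs (n, r) with n >= 1,
  r in H^n, r distinct from the origin.\<close>

definition thetaH :: "nat \<times> (nat \<Rightarrow> real)" where
  "thetaH = (0, (\<lambda>_. 0))"

definition emb :: "nat \<Rightarrow> (nat \<Rightarrow> real) \<Rightarrow> nat \<times> (nat \<Rightarrow> real)" where
  "emb n r = (if r = (\<lambda>_. 0) then thetaH else (n, r))"

definition Hinf_set :: "(nat \<times> (nat \<Rightarrow> real)) set" where
  "Hinf_set = insert thetaH (\<Union>n\<in>{1..}. emb n ` Hn n)"

definition Hinf_top :: "(nat \<times> (nat \<Rightarrow> real)) topology" where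
  "Hinf_top = topology (\<lambda>U. U \<subseteq> Hinf_set
      \<and> (\<forall>n\<ge>1. openin (Hn_top n) {r \<in> Hn n. emb n r \<in> U})
      \<and> (thetaH \<in> U \<longrightarrow> (\<forall>\<^sub>F n in sequentially. emb n ` Hn n \<subseteq> U)))"

text \<open>I^n as functions t :: nat => real with t i in [0,1] for i < n and t i = 0 otherwise;
  coordinate 0 is the concatenation coordinate.\<close>

definition Icube :: "nat \<Rightarrow> (nat \<Rightarrow> real) set" where
  "Icube n = {t. (\<forall>i<n. 0 \<le> t i \<and> t i \<le> 1) \<and> (\<forall>i\<ge>n. t i = 0)}"

definition cube_bd :: "nat \<Rightarrow> (nat \<Rightarrow> real) set" where
  "cube_bd n = {t \<in> Icube n. \<exists>i<n. t i = 0 \<or> t i = 1}"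

text \<open>An identification of I^n / boundary with the sphere S^n_k sending the boundary to the
  base point (the origin): a continuous surjection I^n -> S^n_k, mapping the boundary to the
  origin and the interior injectively onto S^n_k minus the origin.\<close>

definition std_param :: "(nat \<Rightarrow> nat \<Rightarrow> (nat \<Rightarrow> real) \<Rightarrow> (nat \<Rightarrow> real)) \<Rightarrow> bool" where
  "std_param q \<longleftrightarrow> (\<forall>n\<ge>1. \<forall>k\<ge>1.
      continuous_map (subtopology Rtop (Icube n)) (subtopology Rtop (sph n k)) (q n k)
    \<and> q n k ` Icube n = sph n k
    \<and> (\<forall>t\<in>cube_bd n. q n k t = (\<lambda>_. 0))
    \<and> (\<forall>t\<in>Icube n - cube_bd n. q n k t \<noteq> (\<lambda>_. 0))
    \<and> inj_on (q n k) (Icube n - cube_bd n))"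

text \<open>(f * g) restricted to each sphere S^n_k is the usual pi_n concatenation of f and g
  restricted to S^n_k (with respect to the identification q).\<close>

definition hconcat ::
  "(nat \<Rightarrow> nat \<Rightarrow> (nat \<Rightarrow> real) \<Rightarrow> (nat \<Rightarrow> real))
   \<Rightarrow> (nat \<times> (nat \<Rightarrow> real) \<Rightarrow> 'a) \<Rightarrow> (nat \<times> (nat \<Rightarrow> real) \<Rightarrow> 'a)
   \<Rightarrow> nat \<times> (nat \<Rightarrow> real) \<Rightarrow> 'a" where
  "hconcat q f g p =
    (if p = thetaH then f thetaH
     else (let n = fst p; r = snd p;
               k = (THE k. k \<ge> 1 \<and> r \<in> sph n k);
               t = (THE t. t \<in> Icube n - cube_bd n \<and> q n k t = r)
           in if t 0 \<le> 1/2 then f (emb n (q n k (t(0 := 2 * t 0))))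
              else g (emb n (q n k (t(0 := 2 * t 0 - 1))))))"

definition based_maps :: "'a topology \<Rightarrow> 'a \<Rightarrow> (nat \<times> (nat \<Rightarrow> real) \<Rightarrow> 'a) set" where
  "based_maps X x0 = {f. continuous_map Hinf_top X f \<and> f thetaH = x0}"

definition hclass :: "'a topology \<Rightarrow> 'a \<Rightarrow> (nat \<times> (nat \<Rightarrow> real) \<Rightarrow> 'a)
    \<Rightarrow> (nat \<times> (nat \<Rightarrow> real) \<Rightarrow> 'a) set" where
  "hclass X x0 f = {g \<in> based_maps X x0. homotopic_with (\<lambda>h. h thetaH = x0) Hinf_top X f g}"

definition Hinf_grp ::
  "(nat \<Rightarrow> nat \<Rightarrow> (nat \<Rightarrow> real) \<Rightarrow> (nat \<Rightarrow> real)) \<Rightarrow> 'a topology \<Rightarrow> 'a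
     \<Rightarrow> ((nat \<times> (nat \<Rightarrow> real) \<Rightarrow> 'a) set) monoid" where
  "Hinf_grp q X x0 =
    \<lparr>carrier = hclass X x0 ` based_maps X x0,
     monoid.mult = (\<lambda>A B. hclass X x0 (hconcat q (SOME f. f \<in> A) (SOME g. g \<in> B))),
     one = hclass X x0 (\<lambda>_. x0)\<rparr>"

end

theory Submission
  imports Defs
begin

text \<open>A based map into a product is the same thing as a family of based maps into the
  factors, and likewise for based homotopies, because continuity into a product topology is
  checked componentwise. Projecting representatives therefore gives a bijection between
  homotopy classes. It is multiplicative because concatenation commutes with
  post-composition and respects based homotopy. The latter holds because the concatenation
  of two homotopies is continuous: on \<open>\<H>\<^sup>\<infinity>\<close> it equals \<open>f \<circ> A\<^sub>L\<close> or \<open>g \<circ> A\<^sub>R\<close> according to the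
  sign of a continuous real function vanishing exactly on the base point and on the
  "equators" \<open>t\<^sub>0 = 1/2\<close> of the spheres, where both stretching maps \<open>A\<^sub>L\<close>, \<open>A\<^sub>R\<close> hit the
  base point.\<close>

section \<open>The topology of the weak join\<close>

definition Hinf_open :: "(nat \<times> (nat \<Rightarrow> real)) set \<Rightarrow> bool" where
  "Hinf_open U \<longleftrightarrow> U \<subseteq> Hinf_set
      \<and> (\<forall>n\<ge>1. openin (Hn_top n) {r \<in> Hn n. emb n r \<in> U})
      \<and> (thetaH \<in> U \<longrightarrow> (\<forall>\<^sub>F n in sequentially. emb n ` Hn n \<subseteq> U))"

lemma istopology_Hinf_open: "istopology Hinf_open"
  unfolding istopology_def
proof (intro conjI allI impI ballI)
  fix S T assume S: "Hinf_open S" and T: "Hinf_open T"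
  show "Hinf_open (S \<inter> T)" unfolding Hinf_open_def
  proof (intro conjI allI impI)
    show "S \<inter> T \<subseteq> Hinf_set" using S unfolding Hinf_open_def by blast
  next
    fix n :: nat assume "1 \<le> n"
    then have "openin (Hn_top n) ({r \<in> Hn n. emb n r \<in> S} \<inter> {r \<in> Hn n. emb n r \<in> T})"
      using S T unfolding Hinf_open_def by (intro openin_Int) auto
    moreover have "{r \<in> Hn n. emb n r \<in> S} \<inter> {r \<in> Hn n. emb n r \<in> T} = {r \<in> Hn n. emb n r \<in> S \<inter> T}"
      by blast
    ultimately show "openin (Hn_top n) {r \<in> Hn n. emb n r \<in> S \<inter> T}" by simp
  next
    assume "thetaH \<in> S \<inter> T"
    then have "\<forall>\<^sub>F n in sequentially. emb n ` Hn n \<subseteq> S" "\<forall>\<^sub>F n in sequentially. emb n ` Hn n \<subseteq> T"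
      using S T unfolding Hinf_open_def by auto
    then show "\<forall>\<^sub>F n in sequentially. emb n ` Hn n \<subseteq> S \<inter> T"
      by eventually_elim auto
  qed
next
  fix K assume K: "\<forall>U\<in>K. Hinf_open U"
  show "Hinf_open (\<Union>K)" unfolding Hinf_open_def
  proof (intro conjI allI impI)
    show "\<Union>K \<subseteq> Hinf_set" using K unfolding Hinf_open_def by blast
  next
    fix n :: nat assume "1 \<le> n"
    then have "openin (Hn_top n) (\<Union>U\<in>K. {r \<in> Hn n. emb n r \<in> U})"
      using K unfolding Hinf_open_def by (intro openin_Union) auto
    moreover have "(\<Union>U\<in>K. {r \<in> Hn n. emb n r \<in> U}) = {r \<in> Hn n. emb n r \<in> \<Union>K}" by blast
    ultimately show "openin (Hn_top n) {r \<in> Hn n. emb n r \<in> \<Union>K}" by simp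
  next
    assume "thetaH \<in> \<Union>K"
    then obtain U where "U \<in> K" "thetaH \<in> U" by blast
    then have "\<forall>\<^sub>F n in sequentially. emb n ` Hn n \<subseteq> U" using K unfolding Hinf_open_def by auto
    then show "\<forall>\<^sub>F n in sequentially. emb n ` Hn n \<subseteq> \<Union>K"
      by eventually_elim (use \<open>U \<in> K\<close> in blast)
  qed
qed

lemma openin_Hinf_top: "openin Hinf_top U \<longleftrightarrow> Hinf_open U"
proof -
  have "Hinf_top = topology Hinf_open"
    unfolding Hinf_top_def Hinf_open_def by simp
  then show ?thesis using istopology_Hinf_open by (metis topology_inverse')
qed

lemma topspace_Rtop [simp]: "topspace Rtop = UNIV"
  unfolding Rtop_def by simp

lemma topspace_Hn_top [simp]: "topspace (Hn_top n) = Hn n"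
  unfolding Hn_top_def by simp

lemma thetaH_in_Hinf_set [simp]: "thetaH \<in> Hinf_set"
  unfolding Hinf_set_def by simp

lemma emb_in_Hinf_set: "n \<ge> 1 \<Longrightarrow> r \<in> Hn n \<Longrightarrow> emb n r \<in> Hinf_set"
  unfolding Hinf_set_def by auto

lemma emb_zero [simp]: "emb n (\<lambda>_. 0) = thetaH"
  unfolding emb_def by simp

lemma emb_nonzero: "r \<noteq> (\<lambda>_. 0) \<Longrightarrow> emb n r = (n, r)"
  unfolding emb_def by simp

lemma eventually_emb_Hn_subset_Hinf_set: "\<forall>\<^sub>F n in sequentially. emb n ` Hn n \<subseteq> Hinf_set"
  using eventually_ge_at_top[of 1] by eventually_elim (auto simp: emb_in_Hinf_set)

lemma topspace_Hinf_top [simp]: "topspace Hinf_top = Hinf_set"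
proof -
  have "Hinf_open Hinf_set"
    unfolding Hinf_open_def
  proof (intro conjI allI impI)
    fix n :: nat assume "1 \<le> n"
    then have "{r \<in> Hn n. emb n r \<in> Hinf_set} = topspace (Hn_top n)"
      using emb_in_Hinf_set by auto
    then show "openin (Hn_top n) {r \<in> Hn n. emb n r \<in> Hinf_set}" by (metis openin_topspace)
  qed (simp_all add: eventually_emb_Hn_subset_Hinf_set)
  then show ?thesis
    unfolding topspace_def openin_Hinf_top by (auto simp: Hinf_open_def)
qed

lemma Hinf_setE:
  assumes "x \<in> Hinf_set"
  obtains "x = thetaH" | n r where "n \<ge> 1" "r \<in> Hn n" "r \<noteq> (\<lambda>_. 0)" "x = (n, r)"
proof (cases "x = thetaH")
  case False
  then obtain n r where "n \<ge> 1" "r \<in> Hn n" "x = emb n r"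
    using assms unfolding Hinf_set_def by auto
  with False that show ?thesis unfolding emb_def by (auto split: if_splits)
qed (use that in simp)

lemma continuous_map_emb: "n \<ge> 1 \<Longrightarrow> continuous_map (Hn_top n) Hinf_top (emb n)"
  unfolding continuous_map_def by (auto simp: emb_in_Hinf_set openin_Hinf_top Hinf_open_def)

lemma continuous_map_from_Hinf_top:
  assumes img: "g ` Hinf_set \<subseteq> topspace Y"
    and cont: "\<And>n. n \<ge> 1 \<Longrightarrow> continuous_map (Hn_top n) Y (g \<circ> emb n)"
    and tail: "\<And>V. openin Y V \<Longrightarrow> g thetaH \<in> V \<Longrightarrow> \<forall>\<^sub>F n in sequentially. g ` emb n ` Hn n \<subseteq> V"
  shows "continuous_map Hinf_top Y g"
  unfolding continuous_map_def
proof (intro conjI allI impI)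
  show "g \<in> topspace Hinf_top \<rightarrow> topspace Y" using img by auto
  fix V assume V: "openin Y V"
  show "openin Hinf_top {x \<in> topspace Hinf_top. g x \<in> V}"
    unfolding openin_Hinf_top Hinf_open_def
  proof (intro conjI allI impI)
    fix n :: nat assume n: "1 \<le> n"
    have "{r \<in> Hn n. emb n r \<in> {x \<in> topspace Hinf_top. g x \<in> V}} = {r \<in> topspace (Hn_top n). (g \<circ> emb n) r \<in> V}"
      using emb_in_Hinf_set[OF n] by auto
    then show "openin (Hn_top n) {r \<in> Hn n. emb n r \<in> {x \<in> topspace Hinf_top. g x \<in> V}}"
      using openin_continuous_map_preimage[OF cont[OF n] V] by metis
  next
    assume "thetaH \<in> {x \<in> topspace Hinf_top. g x \<in> V}"
    then have "\<forall>\<^sub>F n in sequentially. g ` emb n ` Hn n \<subseteq> V" using tail V by auto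
    then show "\<forall>\<^sub>F n in sequentially. emb n ` Hn n \<subseteq> {x \<in> topspace Hinf_top. g x \<in> V}"
      using eventually_emb_Hn_subset_Hinf_set by eventually_elim auto
  qed auto
qed

lemma mem_sph_iff:
  assumes "k \<ge> 1"
  shows "r \<in> sph n k \<longleftrightarrow> (\<forall>i>n. r i = 0) \<and> (\<Sum>i\<le>n. (r i)^2) * real k = 2 * r 0"
proof -
  have k: "real k > 0" using assms by simp
  define A where "A = (\<Sum>i=1..n. (r i)^2)"
  have "{..n} = insert 0 {1..n}" by auto
  then have sum_split: "(\<Sum>i\<le>n. (r i)^2) = (r 0)^2 + A" unfolding A_def by simp
  have "(r 0 - 1 / real k)^2 + A = (1 / real k)^2 \<longleftrightarrow> (r 0)^2 + A - 2 * r 0 / real k = 0"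
    by (simp add: power2_diff field_simps)
  also have "\<dots> \<longleftrightarrow> ((r 0)^2 + A - 2 * r 0 / real k) * real k = 0" using k by simp
  also have "\<dots> \<longleftrightarrow> ((r 0)^2 + A) * real k = 2 * r 0" using k by (simp add: algebra_simps)
  finally show ?thesis unfolding sph_def A_def sum_split[unfolded A_def] by simp
qed

lemma zero_in_sph: "(\<lambda>_. 0) \<in> sph n k"
  unfolding sph_def by (simp add: power2_eq_square)

lemma sph_support: "r \<in> sph n k \<Longrightarrow> i > n \<Longrightarrow> r i = 0"
  unfolding sph_def by auto

lemma sum_squares_pos:
  fixes n :: nat
  assumes "\<forall>i>n. r i = 0" "r \<noteq> (\<lambda>_. 0)"
  shows "(\<Sum>i\<le>n. (r i)^2) > (0::real)"
proof -
  obtain i where i: "r i \<noteq> 0" using assms(2) by auto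
  then have "i \<le> n" using assms(1) by (metis not_less)
  then have "(r i)^2 \<le> (\<Sum>i\<le>n. (r i)^2)" by (intro member_le_sum) auto
  moreover have "(r i)^2 > 0" using i by simp
  ultimately show ?thesis by linarith
qed

lemma sph_radius_unique:
  assumes "k \<ge> 1" "j \<ge> 1" "r \<in> sph n k" "r \<in> sph n j" "r \<noteq> (\<lambda>_. 0)"
  shows "k = j"
proof -
  have "(\<Sum>i\<le>n. (r i)^2) * real k = (\<Sum>i\<le>n. (r i)^2) * real j"
    using assms mem_sph_iff by simp
  moreover have "(\<Sum>i\<le>n. (r i)^2) > 0"
    using sum_squares_pos[of n r] sph_support[OF assms(3)] assms(5) by blast
  ultimately show ?thesis by simp
qed

lemma abs_le_sph:
  assumes "k \<ge> 1" "r \<in> sph n k"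
  shows "\<bar>r i\<bar> \<le> 2 / real k"
proof -
  have k: "real k > 0" using assms by simp
  have eq: "(r 0 - 1 / real k)^2 + (\<Sum>i=1..n. (r i)^2) = (1 / real k)^2"
    using assms(2) unfolding sph_def by auto
  have nonneg: "(\<Sum>i=1..n. (r i)^2) \<ge> 0" by (simp add: sum_nonneg)
  consider "i = 0" | "i \<noteq> 0" "i \<le> n" | "i > n" by linarith
  then show ?thesis
  proof cases
    case 1
    have "(r 0 - 1 / real k)^2 \<le> (1 / real k)^2" using eq nonneg by linarith
    then have "\<bar>r 0 - 1 / real k\<bar> \<le> \<bar>1 / real k\<bar>" using abs_le_square_iff by blast
    then show ?thesis using 1 k by (simp add: abs_if split: if_splits)
  next
    case 2
    then have "(r i)^2 \<le> (\<Sum>i=1..n. (r i)^2)" by (intro member_le_sum) auto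
    then have "(r i)^2 \<le> (1 / real k)^2" using eq by (smt (verit) zero_le_power2)
    then have "\<bar>r i\<bar> \<le> \<bar>1 / real k\<bar>" using abs_le_square_iff by blast
    then show ?thesis using k by (simp add: field_simps)
  next
    case 3
    then show ?thesis using sph_support[OF assms(2)] k by simp
  qed
qed

lemma sph_subset_Hn: "k \<ge> 1 \<Longrightarrow> sph n k \<subseteq> Hn n"
  unfolding Hn_def by auto

lemma HnE:
  assumes "r \<in> Hn n"
  obtains k where "k \<ge> 1" "r \<in> sph n k"
  using assms unfolding Hn_def by auto

lemma openin_Rtop_contains_cube:
  assumes "openin Rtop T" "(\<lambda>_. 0) \<in> T"
  obtains e where "e > 0" "\<And>x. (\<forall>i. \<bar>x i\<bar> < e) \<Longrightarrow> x \<in> T"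
proof -
  obtain U where fin: "finite {i \<in> UNIV. U i \<noteq> topspace euclideanreal}"
    and U: "\<forall>i \<in> UNIV. openin euclideanreal (U i)"
    and zero: "(\<lambda>_. 0) \<in> Pi\<^sub>E UNIV U" and sub: "Pi\<^sub>E UNIV U \<subseteq> T"
    using assms unfolding Rtop_def openin_product_topology_alt by blast
  have "\<exists>e>0. \<forall>y. \<bar>y\<bar> < e \<longrightarrow> y \<in> U i" for i
  proof -
    have "open (U i)" "0 \<in> U i" using U zero by auto
    then obtain e where "e > 0" "ball 0 e \<subseteq> U i" using open_contains_ball by blast
    then show ?thesis by (force simp: subset_iff dist_real_def)
  qed
  then obtain e where e: "\<And>i. e i > 0" "\<And>i y. \<bar>y\<bar> < e i \<Longrightarrow> y \<in> U i" by metis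
  define F where "F = {i. U i \<noteq> UNIV}"
  have "finite F" using fin unfolding F_def by simp
  define \<epsilon> where "\<epsilon> = Min (insert 1 (e ` F))"
  have "\<epsilon> > 0" unfolding \<epsilon>_def using \<open>finite F\<close> e by (subst Min_gr_iff) auto
  moreover have "x \<in> T" if x: "\<forall>i. \<bar>x i\<bar> < \<epsilon>" for x
  proof -
    have "x i \<in> U i" for i
    proof (cases "i \<in> F")
      case True
      then have "\<epsilon> \<le> e i" unfolding \<epsilon>_def using \<open>finite F\<close> by (intro Min_le) auto
      then show ?thesis using x e by (meson order_less_le_trans)
    qed (auto simp: F_def)
    then show ?thesis using sub by blast
  qed
  ultimately show ?thesis using that by blast
qed

lemma eventually_sph_subset:
  assumes "openin Rtop T" "(\<lambda>_. 0) \<in> T"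
  shows "\<forall>\<^sub>F k in sequentially. sph n k \<subseteq> T"
proof -
  obtain e where e: "e > 0" "\<And>x. (\<forall>i. \<bar>x i\<bar> < e) \<Longrightarrow> x \<in> T"
    using openin_Rtop_contains_cube[OF assms] by blast
  show ?thesis
    using eventually_ge_at_top[of "nat \<lceil>2/e\<rceil> + 1"]
  proof eventually_elim
    case (elim k)
    then have "k \<ge> 1" "real k > 2 / e" by linarith+
    then have "2 / real k < e" using e by (simp add: field_simps)
    then show ?case using abs_le_sph[OF \<open>k \<ge> 1\<close>] e(2) by (meson order_le_less_trans subsetI)
  qed
qed

lemma eventually_abs_le_inverse_in_open:
  assumes "openin euclideanreal V" "(0::real) \<in> V"
  shows "\<forall>\<^sub>F k in sequentially. \<forall>y. \<bar>y\<bar> \<le> 1 / real k \<longrightarrow> y \<in> V"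
proof -
  obtain e where e: "e > 0" "ball 0 e \<subseteq> V" using assms open_contains_ball by (metis open_openin)
  show ?thesis using eventually_ge_at_top[of "nat \<lceil>1/e\<rceil> + 1"]
  proof eventually_elim
    case (elim k)
    then have k: "real k > 1 / e" by linarith
    moreover have "1 / e > 0" using e by simp
    ultimately have "real k > 0" by linarith
    then have "1 / real k < e" using e k by (simp add: field_simps)
    then show ?case using e(2) by (force simp: dist_real_def)
  qed
qed

lemma continuous_map_Rtop_component: "continuous_map Rtop euclideanreal (\<lambda>y. y i)"
  unfolding Rtop_def by (rule continuous_map_product_projection) simp

lemma continuous_map_into_Rtop:
  "(\<And>i. continuous_map X euclideanreal (\<lambda>x. f x i)) \<Longrightarrow> continuous_map X Rtop f"
  unfolding Rtop_def continuous_map_componentwise_UNIV by simp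

lemma openin_Rtop_less:
  assumes "continuous_map Rtop euclideanreal f" "continuous_map Rtop euclideanreal g"
  shows "openin Rtop {y. f y < g y}"
proof -
  have "openin Rtop {y \<in> topspace Rtop. (\<lambda>y. g y - f y) y \<in> {0<..}}"
    by (rule openin_continuous_map_preimage) (auto intro: continuous_map_diff assms)
  then show ?thesis by simp
qed

text \<open>A nonzero point determines the radius of its sphere continuously, via
  \<open>k = 2 r\<^sub>0 / \<Sum> r\<^sub>i\<^sup>2\<close>.\<close>

lemma sph_isolated_in_Hn:
  assumes k: "k \<ge> 1" and x: "x \<in> sph n k" "x \<noteq> (\<lambda>_. 0)"
  obtains W where "openin Rtop W" "x \<in> W" "W \<inter> Hn n \<subseteq> sph n k"
proof -
  define S where "S = (\<lambda>y::nat\<Rightarrow>real. \<Sum>i\<le>n. (y i)^2)"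
  define W where "W = {y. 2 * y 0 < (real k + 1/2) * S y} \<inter> {y. (real k - 1/2) * S y < 2 * y 0}"
  have "openin Rtop W" unfolding W_def S_def power2_eq_square
    by (intro openin_Int openin_Rtop_less continuous_intros continuous_map_Rtop_component) auto
  moreover have "x \<in> W"
  proof -
    have "S x > 0" unfolding S_def using sum_squares_pos[OF _ x(2)] sph_support[OF x(1)] by blast
    moreover have "S x * real k = 2 * x 0" using k x mem_sph_iff unfolding S_def by blast
    ultimately show ?thesis unfolding W_def by (simp add: algebra_simps)
  qed
  moreover have "y \<in> sph n k" if y: "y \<in> W" "y \<in> Hn n" for y
  proof -
    obtain j where j: "j \<ge> 1" "y \<in> sph n j" using y(2) by (rule HnE)
    have Syj: "S y * real j = 2 * y 0" using j mem_sph_iff unfolding S_def by blast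
    have w: "2 * y 0 < (real k + 1/2) * S y" "(real k - 1/2) * S y < 2 * y 0"
      using y(1) unfolding W_def by auto
    have "S y \<ge> 0" unfolding S_def by (simp add: sum_nonneg)
    moreover have "S y \<noteq> 0" using w by auto
    ultimately have "S y > 0" by simp
    moreover have "S y * real j < S y * (real k + 1/2)" "S y * (real k - 1/2) < S y * real j"
      using w Syj by (simp_all add: mult.commute)
    ultimately have "real j < real k + 1/2" "real k - 1/2 < real j" by simp_all
    then have "j = k" by linarith
    then show ?thesis using j by simp
  qed
  ultimately show ?thesis using that by blast
qed

lemma openin_Hn_top_locally:
  assumes "S \<subseteq> Hn n" and "\<And>x. x \<in> S \<Longrightarrow> \<exists>W. openin Rtop W \<and> x \<in> W \<and> W \<inter> Hn n \<subseteq> S"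
  shows "openin (Hn_top n) S"
proof (subst openin_subopen, intro ballI)
  fix x assume "x \<in> S"
  then obtain W where "openin Rtop W" "x \<in> W" "W \<inter> Hn n \<subseteq> S" using assms(2) by blast
  moreover have "openin (Hn_top n) (W \<inter> Hn n)"
    unfolding Hn_top_def openin_subtopology using \<open>openin Rtop W\<close> by blast
  ultimately show "\<exists>T. openin (Hn_top n) T \<and> x \<in> T \<and> T \<subseteq> S" using assms(1) \<open>x \<in> S\<close> by blast
qed

lemma continuous_map_Hn_top_glue:
  assumes cont: "\<And>k. k \<ge> 1 \<Longrightarrow> continuous_map (subtopology Rtop (sph n k)) Y G"
    and img: "G ` Hn n \<subseteq> topspace Y"
    and tail: "\<And>V. openin Y V \<Longrightarrow> G (\<lambda>_. 0) \<in> V \<Longrightarrow> \<forall>\<^sub>F k in sequentially. G ` sph n k \<subseteq> V"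
  shows "continuous_map (Hn_top n) Y G"
  unfolding continuous_map_def
proof (intro conjI allI impI)
  show "G \<in> topspace (Hn_top n) \<rightarrow> topspace Y" using img by auto
  fix V assume V: "openin Y V"
  obtain T where T: "\<And>k. k \<ge> 1 \<Longrightarrow> openin Rtop (T k) \<and> {r \<in> sph n k. G r \<in> V} = T k \<inter> sph n k"
  proof -
    have "\<exists>T. openin Rtop T \<and> {r \<in> sph n k. G r \<in> V} = T \<inter> sph n k" if "k \<ge> 1" for k
      using openin_continuous_map_preimage[OF cont[OF that] V] by (simp add: openin_subtopology)
    then show ?thesis using that by metis
  qed
  have local: "\<exists>W. openin Rtop W \<and> x \<in> W \<and> W \<inter> Hn n \<subseteq> {r \<in> Hn n. G r \<in> V}"
    if x: "x \<in> Hn n" "G x \<in> V" for x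
  proof (cases "x = (\<lambda>_. 0)")
    case True
    obtain K where K: "\<And>k. k \<ge> K \<Longrightarrow> G ` sph n k \<subseteq> V"
      using tail[OF V] x True unfolding eventually_sequentially by blast
    \<comment> \<open>near the origin only the finitely many spheres with \<open>k < K\<close> need separate control\<close>
    define W where "W = (\<Inter>k\<in>{1..<K}. T k) \<inter> topspace Rtop"
    have "openin Rtop W" unfolding W_def using T by (intro openin_INT) auto
    moreover have "x \<in> W" unfolding W_def using T True x zero_in_sph by fastforce
    moreover have "G y \<in> V" if y: "y \<in> W" "y \<in> Hn n" for y
    proof -
      obtain j where j: "j \<ge> 1" "y \<in> sph n j" using y(2) by (rule HnE)
      show ?thesis
      proof (cases "j \<ge> K")
        case False
        then have "y \<in> T j" using y j unfolding W_def by auto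
        then show ?thesis using T[OF j(1)] j by blast
      qed (use K j in blast)
    qed
    ultimately show ?thesis by blast
  next
    case False
    obtain k where k: "k \<ge> 1" "x \<in> sph n k" using x(1) by (rule HnE)
    obtain W where W: "openin Rtop W" "x \<in> W" "W \<inter> Hn n \<subseteq> sph n k"
      using sph_isolated_in_Hn[OF k False] .
    have "openin Rtop (T k \<inter> W)" "x \<in> T k \<inter> W" "T k \<inter> W \<inter> Hn n \<subseteq> {r \<in> Hn n. G r \<in> V}"
      using T[OF k(1)] W x k by (auto intro: openin_Int)
    then show ?thesis by blast
  qed
  show "openin (Hn_top n) {x \<in> topspace (Hn_top n). G x \<in> V}"
    using local by (intro openin_Hn_top_locally) auto
qed

section \<open>The parametrisations of the spheres\<close>

lemma std_paramD:
  assumes "std_param q" "n \<ge> 1" "k \<ge> 1"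
  shows "continuous_map (subtopology Rtop (Icube n)) (subtopology Rtop (sph n k)) (q n k)"
    and "q n k ` Icube n = sph n k"
    and "t \<in> cube_bd n \<Longrightarrow> q n k t = (\<lambda>_. 0)"
    and "t \<in> Icube n - cube_bd n \<Longrightarrow> q n k t \<noteq> (\<lambda>_. 0)"
    and "inj_on (q n k) (Icube n - cube_bd n)"
  using assms unfolding std_param_def by (simp_all del: fun_eq_iff)

lemma Icube_eq_PiE: "Icube n = Pi\<^sub>E UNIV (\<lambda>i. if i < n then {0..1} else {0})"
proof -
  have "(\<forall>i. t i \<in> (if i < n then {0..1} else {0})) \<longleftrightarrow> (\<forall>i<n. 0 \<le> t i \<and> t i \<le> 1) \<and> (\<forall>i\<ge>n. t i = 0)"
    for t :: "nat \<Rightarrow> real"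
    by (metis atLeastAtMost_iff linorder_not_le singletonD singletonI)
  then show ?thesis unfolding Icube_def PiE_UNIV_domain Pi_iff by blast
qed

lemma compactin_Icube: "compactin Rtop (Icube n)"
  unfolding Icube_eq_PiE Rtop_def compactin_PiE by (simp add: compactin_euclidean_iff)

lemma Hausdorff_space_Rtop: "Hausdorff_space Rtop"
  unfolding Rtop_def Hausdorff_space_product_topology by auto

lemma quotient_map_std_param:
  assumes "std_param q" "n \<ge> 1" "k \<ge> 1"
  shows "quotient_map (subtopology Rtop (Icube n)) (subtopology Rtop (sph n k)) (q n k)"
proof (rule continuous_imp_quotient_map)
  show "compact_space (subtopology Rtop (Icube n))"
    by (rule compact_space_subtopology[OF compactin_Icube])
  show "Hausdorff_space (subtopology Rtop (sph n k))"
    by (rule Hausdorff_space_subtopology[OF Hausdorff_space_Rtop])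
  show "continuous_map (subtopology Rtop (Icube n)) (subtopology Rtop (sph n k)) (q n k)"
    by (rule std_paramD(1)[OF assms])
  show "q n k ` topspace (subtopology Rtop (Icube n)) = topspace (subtopology Rtop (sph n k))"
    using std_paramD(2)[OF assms] by simp
qed

lemma continuous_map_sph_via_param:
  assumes "std_param q" "n \<ge> 1" "k \<ge> 1"
    and "continuous_map (subtopology Rtop (Icube n)) Y (G \<circ> q n k)"
  shows "continuous_map (subtopology Rtop (sph n k)) Y G"
  using continuous_compose_quotient_map[OF quotient_map_std_param[OF assms(1-3)] assms(4)] .

definition sph_radius :: "nat \<Rightarrow> (nat \<Rightarrow> real) \<Rightarrow> nat" where
  "sph_radius n r = (THE k. k \<ge> 1 \<and> r \<in> sph n k)"

definition cube_point ::
    "(nat \<Rightarrow> nat \<Rightarrow> (nat \<Rightarrow> real) \<Rightarrow> (nat \<Rightarrow> real)) \<Rightarrow> nat \<Rightarrow> (nat \<Rightarrow> real) \<Rightarrow> (nat \<Rightarrow> real)" where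
  "cube_point q n r = (THE t. t \<in> Icube n - cube_bd n \<and> q n (sph_radius n r) t = r)"

lemma sph_radius_eq:
  assumes "k \<ge> 1" "r \<in> sph n k" "r \<noteq> (\<lambda>_. 0)"
  shows "sph_radius n r = k"
  unfolding sph_radius_def
proof (rule the_equality)
  show "k \<ge> 1 \<and> r \<in> sph n k" using assms by simp
  show "j = k" if "j \<ge> 1 \<and> r \<in> sph n j" for j
    using sph_radius_unique[of j k r n] that assms by simp
qed

lemma cube_point_param:
  assumes "std_param q" "n \<ge> 1" "k \<ge> 1" "t \<in> Icube n - cube_bd n"
  shows "sph_radius n (q n k t) = k" "cube_point q n (q n k t) = t"
proof -
  have "q n k t \<in> sph n k" using std_paramD(2)[OF assms(1-3)] assms(4) by blast
  then show radius: "sph_radius n (q n k t) = k"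
    using sph_radius_eq[OF assms(3)] std_paramD(4)[OF assms] by blast
  show "cube_point q n (q n k t) = t" unfolding cube_point_def radius
  proof (rule the_equality)
    show "s = t" if "s \<in> Icube n - cube_bd n \<and> q n k s = q n k t" for s
      using inj_onD[OF std_paramD(5)[OF assms(1-3)], of s t] that assms(4) by simp
  qed (use assms(4) in simp)
qed

lemma param_cube_point:
  assumes "std_param q" "n \<ge> 1" "k \<ge> 1" "r \<in> sph n k" "r \<noteq> (\<lambda>_. 0)"
  shows "sph_radius n r = k" "cube_point q n r \<in> Icube n - cube_bd n" "q n k (cube_point q n r) = r"
proof -
  have img: "q n k ` Icube n = sph n k" by (rule std_paramD(2)[OF assms(1-3)])
  obtain t where t: "t \<in> Icube n" "q n k t = r" using img assms(4) by (metis imageE)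
  have "t \<notin> cube_bd n"
  proof
    assume "t \<in> cube_bd n"
    then have "q n k t = (\<lambda>_. 0)" by (rule std_paramD(3)[OF assms(1-3)])
    then show False using t(2) assms(5) by simp
  qed
  then have interior: "t \<in> Icube n - cube_bd n" using t(1) by blast
  have "cube_point q n r = t" using cube_point_param(2)[OF assms(1-3) interior] t(2) by simp
  then show "cube_point q n r \<in> Icube n - cube_bd n" "q n k (cube_point q n r) = r"
    using interior t(2) by simp_all
  show "sph_radius n r = k" by (rule sph_radius_eq[OF assms(3-5)])
qed

section \<open>Maps of \<open>\<H>\<^sup>\<infinity>\<close> induced by maps of the cubes\<close>

definition cube_self_map :: "(nat \<Rightarrow> (nat \<Rightarrow> real) \<Rightarrow> (nat \<Rightarrow> real)) \<Rightarrow> bool" where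
  "cube_self_map \<phi> \<longleftrightarrow> (\<forall>n\<ge>1.
      continuous_map (subtopology Rtop (Icube n)) (subtopology Rtop (Icube n)) (\<phi> n)
    \<and> (\<forall>t\<in>cube_bd n. \<phi> n t \<in> cube_bd n))"

definition sph_map where
  "sph_map q \<phi> n r = (if r = (\<lambda>_. 0) then (\<lambda>_. 0) else q n (sph_radius n r) (\<phi> n (cube_point q n r)))"

definition Hinf_map where
  "Hinf_map q \<phi> x = emb (fst x) (sph_map q \<phi> (fst x) (snd x))"

lemma cube_self_map_Icube: "cube_self_map \<phi> \<Longrightarrow> n \<ge> 1 \<Longrightarrow> t \<in> Icube n \<Longrightarrow> \<phi> n t \<in> Icube n"
  unfolding cube_self_map_def using continuous_map_image_subset_topspace by fastforce

lemma sph_map_param: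
  assumes "std_param q" "cube_self_map \<phi>" "n \<ge> 1" "k \<ge> 1" "t \<in> Icube n"
  shows "sph_map q \<phi> n (q n k t) = q n k (\<phi> n t)"
proof (cases "t \<in> cube_bd n")
  case True
  then have "\<phi> n t \<in> cube_bd n" using assms(2,3) unfolding cube_self_map_def by blast
  then show ?thesis using std_paramD(3)[OF assms(1,3,4)] True unfolding sph_map_def by simp
next
  case False
  then have "t \<in> Icube n - cube_bd n" using assms(5) by blast
  then show ?thesis
    using std_paramD(4)[OF assms(1,3,4)] cube_point_param[OF assms(1,3,4)] unfolding sph_map_def by simp
qed

lemma sph_map_sph:
  assumes "std_param q" "cube_self_map \<phi>" "n \<ge> 1" "k \<ge> 1" "r \<in> sph n k"
  shows "sph_map q \<phi> n r \<in> sph n k"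
proof (cases "r = (\<lambda>_. 0)")
  case False
  note r = param_cube_point[OF assms(1,3,4,5) False]
  have "\<phi> n (cube_point q n r) \<in> Icube n" using cube_self_map_Icube[OF assms(2,3)] r(2) by blast
  then show ?thesis using False r(1) std_paramD(2)[OF assms(1,3,4)] unfolding sph_map_def by auto
qed (simp add: sph_map_def zero_in_sph)

lemma sph_map_Hn:
  "std_param q \<Longrightarrow> cube_self_map \<phi> \<Longrightarrow> n \<ge> 1 \<Longrightarrow> r \<in> Hn n \<Longrightarrow> sph_map q \<phi> n r \<in> Hn n"
  by (elim HnE) (use sph_map_sph sph_subset_Hn in blast)

lemma continuous_map_sph_map:
  assumes q: "std_param q" and \<phi>: "cube_self_map \<phi>" and n: "n \<ge> 1"
  shows "continuous_map (Hn_top n) (Hn_top n) (sph_map q \<phi> n)"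
proof (rule continuous_map_Hn_top_glue)
  fix k :: nat assume k: "k \<ge> 1"
  show "continuous_map (subtopology Rtop (sph n k)) (Hn_top n) (sph_map q \<phi> n)"
  proof (rule continuous_map_sph_via_param[OF q n k])
    have "continuous_map (subtopology Rtop (Icube n)) (subtopology Rtop (sph n k)) (q n k \<circ> \<phi> n)"
      using \<phi> n std_paramD(1)[OF q n k] unfolding cube_self_map_def by (metis continuous_map_compose)
    then have "continuous_map (subtopology Rtop (Icube n)) (Hn_top n) (q n k \<circ> \<phi> n)"
      unfolding Hn_top_def using sph_subset_Hn[OF k] by (simp add: continuous_map_in_subtopology) blast
    then show "continuous_map (subtopology Rtop (Icube n)) (Hn_top n) (sph_map q \<phi> n \<circ> q n k)"
      by (rule continuous_map_eq) (simp add: sph_map_param[OF q \<phi> n k])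
  qed
next
  show "sph_map q \<phi> n ` Hn n \<subseteq> topspace (Hn_top n)" using sph_map_Hn[OF q \<phi> n] by auto
next
  fix V assume V: "openin (Hn_top n) V" "sph_map q \<phi> n (\<lambda>_. 0) \<in> V"
  then obtain T where T: "openin Rtop T" "V = T \<inter> Hn n"
    unfolding Hn_top_def openin_subtopology by blast
  have "(\<lambda>_. 0) \<in> T" using V T unfolding sph_map_def by simp
  then have "\<forall>\<^sub>F k in sequentially. sph n k \<subseteq> T" using eventually_sph_subset T(1) by blast
  then show "\<forall>\<^sub>F k in sequentially. sph_map q \<phi> n ` sph n k \<subseteq> V"
    using eventually_ge_at_top[of 1]
    by eventually_elim (use sph_map_sph[OF q \<phi> n] sph_subset_Hn T(2) in blast)
qed

lemma Hinf_map_emb: "Hinf_map q \<phi> (emb n r) = emb n (sph_map q \<phi> n r)"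
  unfolding Hinf_map_def emb_def thetaH_def sph_map_def by simp

lemma Hinf_map_thetaH [simp]: "Hinf_map q \<phi> thetaH = thetaH"
  unfolding Hinf_map_def thetaH_def sph_map_def emb_def by simp

lemma continuous_map_Hinf_map:
  assumes q: "std_param q" and \<phi>: "cube_self_map \<phi>"
  shows "continuous_map Hinf_top Hinf_top (Hinf_map q \<phi>)"
proof (rule continuous_map_from_Hinf_top)
  show "Hinf_map q \<phi> ` Hinf_set \<subseteq> topspace Hinf_top"
  proof (rule image_subsetI)
    fix x assume "x \<in> Hinf_set"
    then show "Hinf_map q \<phi> x \<in> topspace Hinf_top"
    proof (cases rule: Hinf_setE)
      case (2 n r)
      then have "x = emb n r" by (simp add: emb_nonzero)
      then show ?thesis using 2 Hinf_map_emb sph_map_Hn[OF q \<phi>] emb_in_Hinf_set by simp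
    qed simp
  qed
next
  fix n :: nat assume n: "n \<ge> 1"
  have "continuous_map (Hn_top n) Hinf_top (emb n \<circ> sph_map q \<phi> n)"
    using continuous_map_compose[OF continuous_map_sph_map[OF q \<phi> n] continuous_map_emb[OF n]] .
  then show "continuous_map (Hn_top n) Hinf_top (Hinf_map q \<phi> \<circ> emb n)"
    by (rule continuous_map_eq) (simp add: Hinf_map_emb)
next
  fix V assume V: "openin Hinf_top V" "Hinf_map q \<phi> thetaH \<in> V"
  then have "\<forall>\<^sub>F n in sequentially. emb n ` Hn n \<subseteq> V"
    unfolding openin_Hinf_top Hinf_open_def by simp
  then show "\<forall>\<^sub>F n in sequentially. Hinf_map q \<phi> ` emb n ` Hn n \<subseteq> V"
    using eventually_ge_at_top[of 1]
    by eventually_elim (use Hinf_map_emb sph_map_Hn[OF q \<phi>] in blast)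
qed

section \<open>Concatenation as a continuous case distinction\<close>

lemma Icube_interior_coord: "t \<in> Icube n - cube_bd n \<Longrightarrow> i < n \<Longrightarrow> 0 < t i \<and> t i < 1"
  unfolding Icube_def cube_bd_def by (force simp: less_le)

lemma cube_self_map_update_first:
  assumes cont: "continuous_on UNIV h" and h01: "\<And>x. 0 \<le> x \<Longrightarrow> x \<le> 1 \<Longrightarrow> 0 \<le> h x \<and> h x \<le> 1"
    and h0: "h 0 \<in> {0, 1}" and h1: "h 1 \<in> {0, 1}"
  shows "cube_self_map (\<lambda>n t. t(0 := h (t 0)))"
  unfolding cube_self_map_def
proof (intro allI impI conjI ballI)
  fix n :: nat assume n: "n \<ge> 1"
  have Icube: "t(0 := h (t 0)) \<in> Icube n" if "t \<in> Icube n" for t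
    using that n h01[of "t 0"] unfolding Icube_def by auto
  have "continuous_map (subtopology Rtop (Icube n)) euclideanreal (\<lambda>t. (t(0 := h (t 0))) i)" for i
  proof (cases "i = 0")
    case True
    have "continuous_map (subtopology Rtop (Icube n)) euclideanreal (h \<circ> (\<lambda>t. t 0))"
      by (rule continuous_map_compose[OF continuous_map_from_subtopology[OF continuous_map_Rtop_component]])
        (simp add: cont)
    then show ?thesis using True by (simp add: o_def)
  qed (simp add: continuous_map_from_subtopology[OF continuous_map_Rtop_component])
  then have "continuous_map (subtopology Rtop (Icube n)) Rtop (\<lambda>t. t(0 := h (t 0)))"
    by (rule continuous_map_into_Rtop)
  then show "continuous_map (subtopology Rtop (Icube n)) (subtopology Rtop (Icube n)) (\<lambda>t. t(0 := h (t 0)))"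
    using Icube by (simp add: continuous_map_in_subtopology image_subset_iff)
  fix t assume t: "t \<in> cube_bd n"
  then obtain i where i: "i < n" "t i = 0 \<or> t i = 1" unfolding cube_bd_def by blast
  have "t(0 := h (t 0)) \<in> Icube n" using t Icube unfolding cube_bd_def by blast
  moreover have "(t(0 := h (t 0))) i = 0 \<or> (t(0 := h (t 0))) i = 1"
    using i h0 h1 by (cases "i = 0") auto
  ultimately show "t(0 := h (t 0)) \<in> cube_bd n" using i(1) unfolding cube_bd_def by blast
qed

definition stretch_lower :: "nat \<Rightarrow> (nat \<Rightarrow> real) \<Rightarrow> (nat \<Rightarrow> real)" where
  "stretch_lower = (\<lambda>n t. t(0 := min 1 (2 * t 0)))"

definition stretch_upper :: "nat \<Rightarrow> (nat \<Rightarrow> real) \<Rightarrow> (nat \<Rightarrow> real)" where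
  "stretch_upper = (\<lambda>n t. t(0 := max 0 (2 * t 0 - 1)))"

lemma cube_self_map_stretch_lower: "cube_self_map stretch_lower"
proof -
  have "cube_self_map (\<lambda>n t. t(0 := (\<lambda>x. min 1 (2 * x)) (t 0)))"
    by (rule cube_self_map_update_first) (auto intro!: continuous_intros)
  then show ?thesis unfolding stretch_lower_def by simp
qed

lemma cube_self_map_stretch_upper: "cube_self_map stretch_upper"
proof -
  have "cube_self_map (\<lambda>n t. t(0 := (\<lambda>x. max 0 (2 * x - 1)) (t 0)))"
    by (rule cube_self_map_update_first) (auto intro!: continuous_intros)
  then show ?thesis unfolding stretch_upper_def by simp
qed

text \<open>The factor \<open>1/(n k)\<close> makes the side function tend to \<open>0\<close> towards the base point, uniformly
  in both the dimension \<open>n\<close> and the sphere \<open>S\<^sup>n\<^sub>k\<close>.\<close>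

definition cube_side :: "nat \<Rightarrow> nat \<Rightarrow> (nat \<Rightarrow> real) \<Rightarrow> real" where
  "cube_side n k t = (t 0 - 1/2) * (\<Prod>i<n. t i * (1 - t i)) * (1 / (real n * real k))"

definition sph_side where
  "sph_side q n r = (if r = (\<lambda>_. 0) then 0 else cube_side n (sph_radius n r) (cube_point q n r))"

definition Hinf_side where
  "Hinf_side q x = sph_side q (fst x) (snd x)"

lemma cube_side_cube_bd: "t \<in> cube_bd n \<Longrightarrow> cube_side n k t = 0"
  unfolding cube_bd_def cube_side_def by (auto simp: prod_zero_iff)

lemma abs_cube_side_le:
  assumes "t \<in> Icube n" "n \<ge> 1" "k \<ge> 1"
  shows "\<bar>cube_side n k t\<bar> \<le> 1 / (real n * real k)"
proof -
  have coord: "0 \<le> t i \<and> t i \<le> 1" if "i < n" for i using assms that unfolding Icube_def by auto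
  then have "0 \<le> t i * (1 - t i) \<and> t i * (1 - t i) \<le> 1" if "i < n" for i
    using that by (simp add: mult_le_one)
  then have prod: "0 \<le> (\<Prod>i<n. t i * (1 - t i))" "(\<Prod>i<n. t i * (1 - t i)) \<le> 1"
    by (auto intro: prod_nonneg prod_le_1)
  have "\<bar>t 0 - 1/2\<bar> \<le> 1" using coord[of 0] assms(2) by auto
  have "\<bar>cube_side n k t\<bar> = \<bar>t 0 - 1/2\<bar> * (\<Prod>i<n. t i * (1 - t i)) * (1 / (real n * real k))"
    unfolding cube_side_def using prod by (simp add: abs_mult)
  also have "\<dots> \<le> 1 * 1 * (1 / (real n * real k))"
    using \<open>\<bar>t 0 - 1/2\<bar> \<le> 1\<close> prod by (intro mult_right_mono mult_mono) auto
  finally show ?thesis by simp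
qed

lemma cube_side_sign:
  assumes "t \<in> Icube n - cube_bd n" "k \<ge> 1" "n \<ge> 1"
  shows "cube_side n k t \<le> 0 \<longleftrightarrow> t 0 \<le> 1/2" "cube_side n k t = 0 \<longleftrightarrow> t 0 = 1/2"
proof -
  define c where "c = (\<Prod>i<n. t i * (1 - t i)) * (1 / (real n * real k))"
  have "0 < (\<Prod>i<n. t i * (1 - t i))"
    using Icube_interior_coord[OF assms(1)] by (intro prod_pos) auto
  then have "c > 0" unfolding c_def using assms(2,3) by simp
  moreover have "cube_side n k t = (t 0 - 1/2) * c"
    unfolding cube_side_def c_def by (simp add: mult.assoc)
  ultimately show "cube_side n k t \<le> 0 \<longleftrightarrow> t 0 \<le> 1/2" "cube_side n k t = 0 \<longleftrightarrow> t 0 = 1/2"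
    by (simp_all add: mult_le_0_iff)
qed

lemma continuous_map_cube_side: "continuous_map (subtopology Rtop (Icube n)) euclideanreal (cube_side n k)"
proof -
  have "continuous_map (subtopology Rtop (Icube n)) euclideanreal (\<lambda>t. t i)" for i
    using continuous_map_from_subtopology[OF continuous_map_Rtop_component] .
  then show ?thesis unfolding cube_side_def
    by (intro continuous_map_real_mult continuous_map_diff continuous_map_prod continuous_map_const[THEN iffD2]) auto
qed

lemma sph_side_param:
  assumes "std_param q" "n \<ge> 1" "k \<ge> 1" "t \<in> Icube n"
  shows "sph_side q n (q n k t) = cube_side n k t"
proof (cases "t \<in> cube_bd n")
  case True
  then show ?thesis using std_paramD(3)[OF assms(1-3) True] cube_side_cube_bd unfolding sph_side_def by simp
next
  case False
  then have "t \<in> Icube n - cube_bd n" using assms(4) by blast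
  then show ?thesis
    using std_paramD(4)[OF assms(1-3)] cube_point_param[OF assms(1-3)] unfolding sph_side_def by simp
qed

lemma abs_sph_side_le:
  assumes "std_param q" "n \<ge> 1" "k \<ge> 1" "r \<in> sph n k"
  shows "\<bar>sph_side q n r\<bar> \<le> 1 / (real n * real k)"
proof (cases "r = (\<lambda>_. 0)")
  case False
  note r = param_cube_point[OF assms False]
  show ?thesis using abs_cube_side_le[of "cube_point q n r" n k] r False assms unfolding sph_side_def by simp
qed (use assms in \<open>simp add: sph_side_def\<close>)

lemma continuous_map_sph_side:
  assumes q: "std_param q" and n: "n \<ge> 1"
  shows "continuous_map (Hn_top n) euclideanreal (sph_side q n)"
proof (rule continuous_map_Hn_top_glue)
  fix k :: nat assume k: "k \<ge> 1"
  show "continuous_map (subtopology Rtop (sph n k)) euclideanreal (sph_side q n)"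
    by (rule continuous_map_sph_via_param[OF q n k], rule continuous_map_eq[OF continuous_map_cube_side])
      (simp add: sph_side_param[OF q n k])
next
  fix V assume V: "openin euclideanreal V" "sph_side q n (\<lambda>_. 0) \<in> V"
  then have "\<forall>\<^sub>F k in sequentially. \<forall>y. \<bar>y\<bar> \<le> 1 / real k \<longrightarrow> y \<in> V"
    by (intro eventually_abs_le_inverse_in_open) (auto simp: sph_side_def)
  then show "\<forall>\<^sub>F k in sequentially. sph_side q n ` sph n k \<subseteq> V"
    using eventually_ge_at_top[of 1]
  proof eventually_elim
    case (elim k)
    have "1 / (real n * real k) \<le> 1 / real k" using n elim(2) by (simp add: field_simps)
    then have "\<bar>sph_side q n r\<bar> \<le> 1 / real k" if "r \<in> sph n k" for r
      using abs_sph_side_le[OF q n elim(2) that] by linarith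
    then show ?case using elim(1) by blast
  qed
qed simp

lemma Hinf_side_emb: "Hinf_side q (emb n r) = sph_side q n r"
  unfolding Hinf_side_def emb_def thetaH_def sph_side_def by auto

lemma Hinf_side_thetaH [simp]: "Hinf_side q thetaH = 0"
  unfolding Hinf_side_def thetaH_def sph_side_def by simp

lemma continuous_map_Hinf_side:
  assumes q: "std_param q"
  shows "continuous_map Hinf_top euclideanreal (Hinf_side q)"
proof (rule continuous_map_from_Hinf_top)
  fix n :: nat assume n: "n \<ge> 1"
  show "continuous_map (Hn_top n) euclideanreal (Hinf_side q \<circ> emb n)"
    by (rule continuous_map_eq[OF continuous_map_sph_side[OF q n]]) (simp add: Hinf_side_emb)
next
  fix V assume "openin euclideanreal V" "Hinf_side q thetaH \<in> V"
  then have "\<forall>\<^sub>F n in sequentially. \<forall>y. \<bar>y\<bar> \<le> 1 / real n \<longrightarrow> y \<in> V"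
    by (intro eventually_abs_le_inverse_in_open) auto
  then show "\<forall>\<^sub>F n in sequentially. Hinf_side q ` emb n ` Hn n \<subseteq> V"
    using eventually_ge_at_top[of 1]
  proof eventually_elim
    case (elim n)
    have "\<bar>Hinf_side q (emb n r)\<bar> \<le> 1 / real n" if r: "r \<in> Hn n" for r
    proof -
      obtain k where k: "k \<ge> 1" "r \<in> sph n k" using r by (rule HnE)
      have "1 / (real n * real k) \<le> 1 / real n" using k elim by (simp add: field_simps)
      then show ?thesis using abs_sph_side_le[OF q elim(2) k] unfolding Hinf_side_emb by linarith
    qed
    then show ?case using elim(1) by blast
  qed
qed simp

lemma hconcat_thetaH [simp]: "hconcat q f g thetaH = f thetaH"
  unfolding hconcat_def by simp

lemma hconcat_nonzero:
  assumes "r \<noteq> (\<lambda>_. 0)"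
  shows "hconcat q f g (n, r) =
    (let k = sph_radius n r; t = cube_point q n r
     in if t 0 \<le> 1/2 then f (emb n (q n k (t(0 := 2 * t 0))))
        else g (emb n (q n k (t(0 := 2 * t 0 - 1)))))"
proof -
  have "(n, r) \<noteq> thetaH" using assms unfolding thetaH_def by auto
  then show ?thesis unfolding hconcat_def sph_radius_def cube_point_def by (simp add: Let_def)
qed

lemma Hinf_set_nonzero_coords:
  assumes q: "std_param q" and n: "n \<ge> 1" and r: "r \<in> Hn n" "r \<noteq> (\<lambda>_. 0)"
  obtains k where "k \<ge> 1" "sph_radius n r = k" "cube_point q n r \<in> Icube n - cube_bd n"
    "Hinf_side q (n, r) = cube_side n k (cube_point q n r)"
    "\<And>\<phi>. Hinf_map q \<phi> (n, r) = emb n (q n k (\<phi> n (cube_point q n r)))"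
proof -
  obtain k where k: "k \<ge> 1" "r \<in> sph n k" using r(1) by (rule HnE)
  note coords = param_cube_point[OF q n k r(2)]
  show ?thesis
  proof (rule that[OF k(1) coords(1,2)])
    show "Hinf_side q (n, r) = cube_side n k (cube_point q n r)"
      unfolding Hinf_side_def sph_side_def using r(2) coords(1) by simp
    show "Hinf_map q \<phi> (n, r) = emb n (q n k (\<phi> n (cube_point q n r)))" for \<phi>
      unfolding Hinf_map_def sph_map_def using r(2) coords(1) by simp
  qed
qed

lemma hconcat_eq_side_cases:
  assumes q: "std_param q" and x: "x \<in> Hinf_set"
  shows "hconcat q f g x =
    (if Hinf_side q x \<le> 0 then f (Hinf_map q stretch_lower x) else g (Hinf_map q stretch_upper x))"
  using x
proof (cases rule: Hinf_setE)
  case (2 n r)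
  obtain k where k: "k \<ge> 1" "sph_radius n r = k" "cube_point q n r \<in> Icube n - cube_bd n"
    "Hinf_side q (n, r) = cube_side n k (cube_point q n r)"
    "\<And>\<phi>. Hinf_map q \<phi> (n, r) = emb n (q n k (\<phi> n (cube_point q n r)))"
    using Hinf_set_nonzero_coords[OF q 2(1,2,3)] by metis
  define t where "t = cube_point q n r"
  have "Hinf_side q (n, r) \<le> 0 \<longleftrightarrow> t 0 \<le> 1/2"
    using cube_side_sign(1)[OF k(3) k(1) 2(1)] k(4) t_def by simp
  then show ?thesis
    using k hconcat_nonzero[OF 2(3), of q f g n] 2(4)
    unfolding t_def stretch_lower_def stretch_upper_def by (auto simp: Let_def)
qed simp

lemma Hinf_map_stretch_equator:
  assumes q: "std_param q" and x: "x \<in> Hinf_set" and side: "Hinf_side q x = 0"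
  shows "Hinf_map q stretch_lower x = thetaH" "Hinf_map q stretch_upper x = thetaH"
proof -
  have "Hinf_map q stretch_lower x = thetaH \<and> Hinf_map q stretch_upper x = thetaH"
    using x
  proof (cases rule: Hinf_setE)
    case (2 n r)
    obtain k where k: "k \<ge> 1" "sph_radius n r = k" "cube_point q n r \<in> Icube n - cube_bd n"
      "Hinf_side q (n, r) = cube_side n k (cube_point q n r)"
      "\<And>\<phi>. Hinf_map q \<phi> (n, r) = emb n (q n k (\<phi> n (cube_point q n r)))"
      using Hinf_set_nonzero_coords[OF q 2(1,2,3)] by metis
    define t where "t = cube_point q n r"
    have "t 0 = 1/2" using cube_side_sign(2)[OF k(3) k(1) 2(1)] k(4) side 2(4) t_def by simp
    moreover have "stretch_lower n t \<in> Icube n" "stretch_upper n t \<in> Icube n"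
      using cube_self_map_Icube[OF cube_self_map_stretch_lower 2(1)]
        cube_self_map_Icube[OF cube_self_map_stretch_upper 2(1)] k(3) t_def by auto
    ultimately have "stretch_lower n t \<in> cube_bd n" "stretch_upper n t \<in> cube_bd n"
      using 2(1) unfolding cube_bd_def stretch_lower_def stretch_upper_def by auto
    then show ?thesis
      using k(5)[of stretch_lower] k(5)[of stretch_upper] std_paramD(3)[OF q 2(1) k(1)] 2(4)
      unfolding t_def by simp
  qed simp
  then show "Hinf_map q stretch_lower x = thetaH" "Hinf_map q stretch_upper x = thetaH" by simp_all
qed

lemma continuous_map_hconcat_homotopies:
  assumes q: "std_param q"
    and F: "continuous_map (prod_topology (top_of_set {0..1::real}) Hinf_top) Z F"
    and G: "continuous_map (prod_topology (top_of_set {0..1::real}) Hinf_top) Z G"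
    and FG: "\<And>s. s \<in> {0..1} \<Longrightarrow> F (s, thetaH) = G (s, thetaH)"
  shows "continuous_map (prod_topology (top_of_set {0..1::real}) Hinf_top) Z
           (\<lambda>z. hconcat q (\<lambda>y. F (fst z, y)) (\<lambda>y. G (fst z, y)) (snd z))"
proof -
  let ?T = "prod_topology (top_of_set {0..1::real}) Hinf_top"
  have stretch: "continuous_map ?T ?T (\<lambda>z. (fst z, Hinf_map q \<phi> (snd z)))" if "cube_self_map \<phi>" for \<phi>
    using continuous_map_compose[OF continuous_map_snd continuous_map_Hinf_map[OF q that]]
    by (intro continuous_map_pairedI continuous_map_fst) (simp add: o_def)
  have side: "continuous_map ?T euclideanreal (\<lambda>z. Hinf_side q (snd z))"
    using continuous_map_compose[OF continuous_map_snd continuous_map_Hinf_side[OF q]] by (simp add: o_def)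
  have "continuous_map ?T Z (\<lambda>z. if Hinf_side q (snd z) \<le> 0 then F (fst z, Hinf_map q stretch_lower (snd z))
      else G (fst z, Hinf_map q stretch_upper (snd z)))"
  proof (rule continuous_map_cases_le[OF side continuous_map_const[THEN iffD2]];
      (intro continuous_map_from_subtopology)?)
    show "continuous_map ?T Z (\<lambda>z. F (fst z, Hinf_map q stretch_lower (snd z)))"
      using continuous_map_compose[OF stretch[OF cube_self_map_stretch_lower] F] by (simp add: o_def)
    show "continuous_map ?T Z (\<lambda>z. G (fst z, Hinf_map q stretch_upper (snd z)))"
      using continuous_map_compose[OF stretch[OF cube_self_map_stretch_upper] G] by (simp add: o_def)
    fix z assume "z \<in> topspace ?T" "Hinf_side q (snd z) = 0"
    then show "F (fst z, Hinf_map q stretch_lower (snd z)) = G (fst z, Hinf_map q stretch_upper (snd z))"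
      using Hinf_map_stretch_equator[OF q] FG by (auto simp: topspace_prod_topology)
  qed simp
  then show ?thesis
    by (rule continuous_map_eq) (auto simp: topspace_prod_topology hconcat_eq_side_cases[OF q])
qed

section \<open>Based homotopy classes\<close>

abbreviation based_homotopic where
  "based_homotopic X x0 f g \<equiv> homotopic_with (\<lambda>h. h thetaH = x0) Hinf_top X f g"

lemma hconcat_in_based_maps:
  assumes q: "std_param q" and f: "f \<in> based_maps X x0" and g: "g \<in> based_maps X x0"
  shows "hconcat q f g \<in> based_maps X x0"
proof -
  let ?T = "prod_topology (top_of_set {0..1::real}) Hinf_top"
  have "continuous_map Hinf_top X f" "continuous_map Hinf_top X g"
    using f g unfolding based_maps_def by auto
  then have "continuous_map ?T X (f \<circ> snd)" "continuous_map ?T X (g \<circ> snd)"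
    using continuous_map_compose[OF continuous_map_snd] by blast+
  then have H: "continuous_map ?T X (\<lambda>z. hconcat q (\<lambda>y. f y) (\<lambda>y. g y) (snd z))"
    using continuous_map_hconcat_homotopies[OF q, of X "f \<circ> snd" "g \<circ> snd"] f g
    unfolding based_maps_def by (simp add: o_def)
  have "continuous_map Hinf_top ?T (\<lambda>y. (0::real, y))"
    by (intro continuous_map_pairedI) (simp_all add: continuous_map_id[unfolded id_def])
  from continuous_map_compose[OF this H] have "continuous_map Hinf_top X (hconcat q f g)"
    by (simp add: o_def)
  then show ?thesis using f unfolding based_maps_def by simp
qed

lemma hconcat_homotopic:
  assumes q: "std_param q" and "based_homotopic X x0 f f'" and "based_homotopic X x0 g g'"
  shows "based_homotopic X x0 (hconcat q f g) (hconcat q f' g')"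
proof -
  obtain F where F: "continuous_map (prod_topology (top_of_set {0..1::real}) Hinf_top) X F"
    "\<forall>x. F (0, x) = f x" "\<forall>x. F (1, x) = f' x" "\<forall>t\<in>{0..1}. F (t, thetaH) = x0"
    using assms(2) unfolding homotopic_with_def by auto
  obtain G where G: "continuous_map (prod_topology (top_of_set {0..1::real}) Hinf_top) X G"
    "\<forall>x. G (0, x) = g x" "\<forall>x. G (1, x) = g' x" "\<forall>t\<in>{0..1}. G (t, thetaH) = x0"
    using assms(3) unfolding homotopic_with_def by auto
  have "continuous_map (prod_topology (top_of_set {0..1::real}) Hinf_top) X
      (\<lambda>z. hconcat q (\<lambda>y. F (fst z, y)) (\<lambda>y. G (fst z, y)) (snd z))"
    using continuous_map_hconcat_homotopies[OF q F(1) G(1)] F(4) G(4) by simp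
  moreover have "(\<lambda>y. F (0, y)) = f" "(\<lambda>y. G (0, y)) = g" "(\<lambda>y. F (1, y)) = f'" "(\<lambda>y. G (1, y)) = g'"
    using F G by auto
  ultimately show ?thesis unfolding homotopic_with_def using F(4)
    by (intro exI[of _ "\<lambda>z. hconcat q (\<lambda>y. F (fst z, y)) (\<lambda>y. G (fst z, y)) (snd z)"]) simp
qed

lemma hconcat_compose: "h \<circ> hconcat q f g = hconcat q (h \<circ> f) (h \<circ> g)"
  unfolding hconcat_def Let_def by (simp add: fun_eq_iff)

lemma mem_hclass_iff: "g \<in> hclass X x0 f \<longleftrightarrow> g \<in> based_maps X x0 \<and> based_homotopic X x0 f g"
  unfolding hclass_def by simp

lemma hclass_eq_iff:
  assumes "f \<in> based_maps X x0" "g \<in> based_maps X x0"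
  shows "hclass X x0 f = hclass X x0 g \<longleftrightarrow> based_homotopic X x0 f g"
proof
  assume eq: "hclass X x0 f = hclass X x0 g"
  have "g \<in> hclass X x0 g" using assms(2) by (simp add: mem_hclass_iff based_maps_def)
  then have "g \<in> hclass X x0 f" by (simp add: eq)
  then show "based_homotopic X x0 f g" by (simp add: mem_hclass_iff)
next
  assume fg: "based_homotopic X x0 f g"
  then have "based_homotopic X x0 g f" by (rule homotopic_with_symD)
  then show "hclass X x0 f = hclass X x0 g"
    unfolding hclass_def using fg by (blast intro: homotopic_with_trans)
qed

lemma some_in_hclass:
  assumes "f \<in> based_maps X x0"
  shows "(SOME g. g \<in> hclass X x0 f) \<in> based_maps X x0"
    and "based_homotopic X x0 f (SOME g. g \<in> hclass X x0 f)"
proof -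
  have "f \<in> hclass X x0 f" using assms by (simp add: mem_hclass_iff based_maps_def)
  then have "(SOME g. g \<in> hclass X x0 f) \<in> hclass X x0 f" by (rule someI[where P="\<lambda>g. g \<in> hclass X x0 f"])
  note mem_hclass_iff[THEN iffD1, OF this]
  then show "(SOME g. g \<in> hclass X x0 f) \<in> based_maps X x0"
    and "based_homotopic X x0 f (SOME g. g \<in> hclass X x0 f)" by blast+
qed

lemma Hinf_grp_mult_hclass:
  assumes q: "std_param q" and f: "f \<in> based_maps X x0" and g: "g \<in> based_maps X x0"
  shows "hclass X x0 f \<otimes>\<^bsub>Hinf_grp q X x0\<^esub> hclass X x0 g = hclass X x0 (hconcat q f g)"
proof -
  let ?f = "SOME f'. f' \<in> hclass X x0 f" and ?g = "SOME g'. g' \<in> hclass X x0 g"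
  have "based_homotopic X x0 (hconcat q f g) (hconcat q ?f ?g)"
    by (intro hconcat_homotopic[OF q] some_in_hclass f g)
  then have "hclass X x0 (hconcat q ?f ?g) = hclass X x0 (hconcat q f g)"
    using hclass_eq_iff hconcat_in_based_maps[OF q] some_in_hclass(1) f g by metis
  then show ?thesis unfolding Hinf_grp_def by simp
qed

section \<open>Based maps into a product\<close>

lemma based_maps_component:
  assumes "f \<in> based_maps (product_topology X I) (restrict x I)" "i \<in> I"
  shows "(\<lambda>p. f p i) \<in> based_maps (X i) (x i)"
proof -
  have "continuous_map Hinf_top (X i) ((\<lambda>y. y i) \<circ> f)"
    using assms unfolding based_maps_def
    by (intro continuous_map_compose[OF _ continuous_map_product_projection]) auto
  then show ?thesis using assms unfolding based_maps_def by (simp add: o_def)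
qed

lemma based_homotopic_component:
  assumes "based_homotopic (product_topology X I) (restrict x I) f g" "i \<in> I"
  shows "based_homotopic (X i) (x i) (\<lambda>p. f p i) (\<lambda>p. g p i)"
proof -
  have "based_homotopic (X i) (x i) ((\<lambda>y. y i) \<circ> f) ((\<lambda>y. y i) \<circ> g)"
    using homotopic_with_compose_continuous_map_left[OF assms(1)
        continuous_map_product_projection[OF assms(2)]] assms(2) by simp
  then show ?thesis by (simp add: o_def)
qed

lemma based_maps_tuple:
  assumes "\<And>i. i \<in> I \<Longrightarrow> f i \<in> based_maps (X i) (x i)"
  shows "(\<lambda>p. \<lambda>j\<in>I. f j p) \<in> based_maps (product_topology X I) (restrict x I)"
  using assms unfolding based_maps_def continuous_map_componentwise by auto

lemma based_homotopic_tuple: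
  assumes f: "f \<in> based_maps (product_topology X I) (restrict x I)"
    and g: "g \<in> based_maps (product_topology X I) (restrict x I)"
    and components: "\<And>i. i \<in> I \<Longrightarrow> based_homotopic (X i) (x i) (\<lambda>p. f p i) (\<lambda>p. g p i)"
  shows "based_homotopic (product_topology X I) (restrict x I) f g"
proof -
  let ?T = "prod_topology (top_of_set {0..1::real}) Hinf_top"
  obtain H where H: "\<And>i. i \<in> I \<Longrightarrow> continuous_map ?T (X i) (H i)
      \<and> (\<forall>y. H i (0, y) = f y i) \<and> (\<forall>y. H i (1, y) = g y i) \<and> (\<forall>t\<in>{0..1}. H i (t, thetaH) = x i)"
    using components unfolding homotopic_with_def by metis
  define K where "K = (\<lambda>z. \<lambda>i\<in>I. H i z)"
  have extensional: "f y \<in> extensional I" "g y \<in> extensional I" if "y \<in> Hinf_set" for y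
    using f g that unfolding based_maps_def
    by (auto dest!: continuous_map_image_subset_topspace simp: PiE_def image_subset_iff)
  show ?thesis
  proof (rule iffD2[OF homotopic_with[where P="\<lambda>h. h thetaH = restrict x I" and X=Hinf_top]],
      simp, intro exI conjI ballI)
    show "continuous_map ?T (product_topology X I) K"
      unfolding continuous_map_componentwise K_def using H by auto
  next
    fix y assume y: "y \<in> topspace Hinf_top"
    have "K (0, y) = restrict (f y) I" unfolding K_def by (rule restrict_ext) (use H in blast)
    moreover have "K (1, y) = restrict (g y) I" unfolding K_def by (rule restrict_ext) (use H in blast)
    ultimately show "K (0, y) = f y" "K (1, y) = g y"
      using extensional y by (simp_all add: extensional_restrict)
  next
    fix t :: real assume "t \<in> {0..1}"
    then show "K (t, thetaH) = restrict x I" unfolding K_def using H by (intro restrict_cong) auto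
  qed
qed

definition class_components ::
    "('i \<Rightarrow> 'a topology) \<Rightarrow> ('i \<Rightarrow> 'a) \<Rightarrow> 'i set \<Rightarrow> (nat \<times> (nat \<Rightarrow> real) \<Rightarrow> 'i \<Rightarrow> 'a) set
      \<Rightarrow> 'i \<Rightarrow> (nat \<times> (nat \<Rightarrow> real) \<Rightarrow> 'a) set" where
  "class_components X x I A = (\<lambda>i\<in>I. hclass (X i) (x i) (\<lambda>p. (SOME f. f \<in> A) p i))"

lemma class_components_hclass:
  assumes f: "f \<in> based_maps (product_topology X I) (restrict x I)"
  shows "class_components X x I (hclass (product_topology X I) (restrict x I) f)
    = (\<lambda>i\<in>I. hclass (X i) (x i) (\<lambda>p. f p i))"
  unfolding class_components_def
proof (rule restrict_ext)
  fix i assume i: "i \<in> I"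
  let ?g = "SOME g. g \<in> hclass (product_topology X I) (restrict x I) f"
  have "based_homotopic (X i) (x i) (\<lambda>p. ?g p i) (\<lambda>p. f p i)"
    using based_homotopic_component[OF some_in_hclass(2)[OF f] i] by (rule homotopic_with_symD)
  then show "hclass (X i) (x i) (\<lambda>p. ?g p i) = hclass (X i) (x i) (\<lambda>p. f p i)"
    using hclass_eq_iff based_maps_component[OF _ i] some_in_hclass(1)[OF f] f by metis
qed

lemma class_components_mult:
  assumes q: "std_param q"
    and f: "f \<in> based_maps (product_topology X I) (restrict x I)"
    and g: "g \<in> based_maps (product_topology X I) (restrict x I)"
  shows "class_components X x I
      (hclass (product_topology X I) (restrict x I) f
        \<otimes>\<^bsub>Hinf_grp q (product_topology X I) (restrict x I)\<^esub> hclass (product_topology X I) (restrict x I) g)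
    = class_components X x I (hclass (product_topology X I) (restrict x I) f)
        \<otimes>\<^bsub>product_group I (\<lambda>i. Hinf_grp q (X i) (x i))\<^esub>
      class_components X x I (hclass (product_topology X I) (restrict x I) g)"
proof -
  have "hclass (X i) (x i) (\<lambda>p. hconcat q f g p i)
      = hclass (X i) (x i) (\<lambda>p. f p i) \<otimes>\<^bsub>Hinf_grp q (X i) (x i)\<^esub> hclass (X i) (x i) (\<lambda>p. g p i)"
    if i: "i \<in> I" for i
    using hconcat_compose[of "\<lambda>y. y i" q f g]
      Hinf_grp_mult_hclass[OF q based_maps_component[OF f i] based_maps_component[OF g i]]
    by (simp add: o_def)
  then show ?thesis
    using Hinf_grp_mult_hclass[OF q f g] hconcat_in_based_maps[OF q f g]
    by (simp add: class_components_hclass f g) (rule restrict_ext; simp)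
qed

lemma bij_betw_class_components:
  "bij_betw (class_components X x I)
    (carrier (Hinf_grp q (product_topology X I) (restrict x I)))
    (carrier (product_group I (\<lambda>i. Hinf_grp q (X i) (x i))))"
proof -
  let ?PX = "product_topology X I" and ?px = "restrict x I"
  have inj: "inj_on (class_components X x I) (hclass ?PX ?px ` based_maps ?PX ?px)"
  proof (rule inj_onI)
    fix A B assume "A \<in> hclass ?PX ?px ` based_maps ?PX ?px" "B \<in> hclass ?PX ?px ` based_maps ?PX ?px"
      and eq: "class_components X x I A = class_components X x I B"
    then obtain f g where f: "f \<in> based_maps ?PX ?px" "A = hclass ?PX ?px f"
      and g: "g \<in> based_maps ?PX ?px" "B = hclass ?PX ?px g" by blast
    have "hclass (X i) (x i) (\<lambda>p. f p i) = hclass (X i) (x i) (\<lambda>p. g p i)" if i: "i \<in> I" for i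
      using fun_cong[OF eq, of i] i by (simp add: f g class_components_hclass)
    then have "based_homotopic ?PX ?px f g"
      using f g by (intro based_homotopic_tuple) (auto simp: hclass_eq_iff based_maps_component)
    then show "A = B" using f g by (simp add: hclass_eq_iff)
  qed
  have "(\<lambda>f. class_components X x I (hclass ?PX ?px f)) ` based_maps ?PX ?px
      = (\<Pi>\<^sub>E i\<in>I. hclass (X i) (x i) ` based_maps (X i) (x i))"
  proof (intro equalityI subsetI)
    fix c assume "c \<in> (\<lambda>f. class_components X x I (hclass ?PX ?px f)) ` based_maps ?PX ?px"
    then show "c \<in> (\<Pi>\<^sub>E i\<in>I. hclass (X i) (x i) ` based_maps (X i) (x i))"
      by (auto simp: class_components_hclass based_maps_component)
  next
    fix c assume "c \<in> (\<Pi>\<^sub>E i\<in>I. hclass (X i) (x i) ` based_maps (X i) (x i))"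
    then obtain f where f: "\<And>i. i \<in> I \<Longrightarrow> f i \<in> based_maps (X i) (x i) \<and> c i = hclass (X i) (x i) (f i)"
      and c: "c \<in> extensional I" by (auto simp: PiE_iff image_iff) metis
    let ?F = "\<lambda>p. \<lambda>j\<in>I. f j p"
    have F: "?F \<in> based_maps ?PX ?px" using f by (intro based_maps_tuple) blast
    have "class_components X x I (hclass ?PX ?px ?F) = c"
      using f c by (simp add: class_components_hclass[OF F] fun_eq_iff extensional_def)
    then show "c \<in> (\<lambda>f. class_components X x I (hclass ?PX ?px f)) ` based_maps ?PX ?px"
      using F by blast
  qed
  with inj show ?thesis unfolding bij_betw_def Hinf_grp_def by (simp add: image_image)
qed

theorem theorem3p4:
  fixes X :: "'i \<Rightarrow> 'a topology" and x :: "'i \<Rightarrow> 'a" and I :: "'i set"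
    and q :: "nat \<Rightarrow> nat \<Rightarrow> (nat \<Rightarrow> real) \<Rightarrow> (nat \<Rightarrow> real)"
  assumes "std_param q"
    and "\<forall>i\<in>I. x i \<in> topspace (X i)"
  shows "Hinf_grp q (product_topology X I) (restrict x I)
           \<cong> product_group I (\<lambda>i. Hinf_grp q (X i) (x i))"
proof (rule is_isoI[OF isoI[OF homI bij_betw_class_components]])
  fix A assume "A \<in> carrier (Hinf_grp q (product_topology X I) (restrict x I))"
  then show "class_components X x I A \<in> carrier (product_group I (\<lambda>i. Hinf_grp q (X i) (x i)))"
    using bij_betw_class_components bij_betwE by blast
next
  fix A B assume "A \<in> carrier (Hinf_grp q (product_topology X I) (restrict x I))"
    and "B \<in> carrier (Hinf_grp q (product_topology X I) (restrict x I))"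
  then obtain f g where "f \<in> based_maps (product_topology X I) (restrict x I)" "A = hclass (product_topology X I) (restrict x I) f"
    and "g \<in> based_maps (product_topology X I) (restrict x I)" "B = hclass (product_topology X I) (restrict x I) g"
    unfolding Hinf_grp_def by auto
  then show "class_components X x I (A \<otimes>\<^bsub>Hinf_grp q (product_topology X I) (restrict x I)\<^esub> B)
      = class_components X x I A \<otimes>\<^bsub>product_group I (\<lambda>i. Hinf_grp q (X i) (x i))\<^esub> class_components X x I B"
    using class_components_mult[OF assms(1)] by simp
qed

end
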